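(* Let $d$ be odd and $s$ even with $s\mid d-1$. Let $G=\langle\tau\rangle\rtimes\langle\sigma\rangle$ with $\tau$ of order $d$, $\sigma$ of order $s$, conjugation by $\sigma$ an automorphism of $\langle\tau\rangle$ of order exactly $s$, and $\sigma^{s/2}\tau\sigma^{-s/2}=\tau^{-1}$. For $j\in\mathbb{Z}$ let $\theta_j\in\{1,\dots,d-1\}$ be defined by $\sigma^j\tau\sigma^{-j}=\tau^{\theta_j}$. In $\mathbb{Z}[G]$ put $T_\sigma=\sum_{j=0}^{s-1}\sigma^j$ and \[\mathcal{B}=(1-\sigma^{s/2})\tau^{\frac{d+1}{2}}\sum_{j=0}^{\frac{s}{2}-1}\Big(\sum_{i=0}^{\theta_j-1}\tau^i\Big)\sigma^j.\] Then (i) $\sigma^{s/2}\mathcal{B}=-\mathcal{B}$, and (ii) $(1-\tau)\mathcal{B}=\tau^{\frac{d+1}{2}}T_\sigma(1-\tau)$. *)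

theory Defs
  imports "HOL-Algebra.Algebra" "HOL-Library.Function_Algebras"
begin

text \<open>The integral group ring Z[G] of a finite group G, modelled as integer-valued
functions on the carrier (values outside the carrier are irrelevant/zero).
Addition, subtraction, negation and finite sums are the pointwise ones.\<close>

definition gr_elem :: "('a, 'b) monoid_scheme \<Rightarrow> 'a \<Rightarrow> ('a \<Rightarrow> int)" where
  "gr_elem G g = (\<lambda>h. if h = g then 1 else 0)"

definition gr_mult :: "('a, 'b) monoid_scheme \<Rightarrow> ('a \<Rightarrow> int) \<Rightarrow> ('a \<Rightarrow> int) \<Rightarrow> ('a \<Rightarrow> int)" where
  "gr_mult G x y = (\<lambda>g. if g \<in> carrier G
      then (\<Sum>h\<in>carrier G. x h * y (inv\<^bsub>G\<^esub> h \<otimes>\<^bsub>G\<^esub> g)) else 0)"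

definition theta :: "('a, 'b) monoid_scheme \<Rightarrow> nat \<Rightarrow> 'a \<Rightarrow> 'a \<Rightarrow> nat \<Rightarrow> nat" where
  "theta G d \<tau> \<sigma> j = (THE t. t \<in> {1..d-1} \<and>
      \<sigma> [^]\<^bsub>G\<^esub> j \<otimes>\<^bsub>G\<^esub> \<tau> \<otimes>\<^bsub>G\<^esub> inv\<^bsub>G\<^esub> (\<sigma> [^]\<^bsub>G\<^esub> j) = \<tau> [^]\<^bsub>G\<^esub> t)"

end

theory Submission
  imports Defs
begin

(* Work in Z[G] with D = 1 - tau, u = sigma^(s/2) and m = (d+1)/2; the convolution product is
   associative, so factors may be regrouped freely.  Part (i) is u (1 - u) = -(1 - u), as u is an
   involution.  For part (ii), u inverts tau and tau^(2m-1) = 1, whence D (1 - u) tau^m =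
   tau^m (1 + u) D.  The relation sigma^j tau = tau^(theta_j) sigma^j turns the geometric identity
   D (1 + tau + ... + tau^(theta_j - 1)) = 1 - tau^(theta_j) into
   D (sum_(i < theta_j) tau^i) sigma^j = sigma^j D.  Altogether
   D B = tau^m (1 + u) (sum_(j < s/2) sigma^j) D = tau^m T_sigma D. *)

lemma sum_apply: "(\<Sum>i\<in>A. f i) x = (\<Sum>i\<in>A. f i x)"
  by (induction A rule: infinite_finite_induct) auto

lemma gr_mult_add_left: "gr_mult G (x + y) z = gr_mult G x z + gr_mult G y z"
  by (auto simp: gr_mult_def fun_eq_iff distrib_right sum.distrib)

lemma gr_mult_add_right: "gr_mult G z (x + y) = gr_mult G z x + gr_mult G z y"
  by (auto simp: gr_mult_def fun_eq_iff distrib_left sum.distrib)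

lemma gr_mult_diff_left: "gr_mult G (x - y) z = gr_mult G x z - gr_mult G y z"
  by (auto simp: gr_mult_def fun_eq_iff left_diff_distrib sum_subtractf)

lemma gr_mult_diff_right: "gr_mult G z (x - y) = gr_mult G z x - gr_mult G z y"
  by (auto simp: gr_mult_def fun_eq_iff right_diff_distrib sum_subtractf)

lemma gr_mult_minus_left: "gr_mult G (- x) z = - gr_mult G x z"
  by (auto simp: gr_mult_def fun_eq_iff sum_negf)

lemma gr_mult_sum_left: "gr_mult G (\<Sum>i\<in>A. f i) z = (\<Sum>i\<in>A. gr_mult G (f i) z)"
  by (auto simp: gr_mult_def fun_eq_iff sum_apply sum_distrib_right intro: sum.swap)

lemma gr_mult_sum_right: "gr_mult G z (\<Sum>i\<in>A. f i) = (\<Sum>i\<in>A. gr_mult G z (f i))"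
  by (auto simp: gr_mult_def fun_eq_iff sum_apply sum_distrib_left intro: sum.swap)

lemma sum_lessThan_add: "(\<Sum>j<m + n. f j) = (\<Sum>j<m. f j) + (\<Sum>j<n. f (m + j))"
  for m n :: nat
  by (induction n) (simp_all add: ac_simps)

context group
begin

lemma gr_elem_mult:
  assumes "finite (carrier G)" "a \<in> carrier G" "b \<in> carrier G"
  shows "gr_mult G (gr_elem G a) (gr_elem G b) = gr_elem G (a \<otimes> b)"
proof
  fix g
  show "gr_mult G (gr_elem G a) (gr_elem G b) g = gr_elem G (a \<otimes> b) g"
  proof (cases "g \<in> carrier G")
    case True
    have "(\<Sum>h\<in>carrier G. gr_elem G a h * gr_elem G b (inv h \<otimes> g))
        = (\<Sum>h\<in>carrier G. if h = a then gr_elem G b (inv a \<otimes> g) else 0)"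
      by (rule sum.cong) (auto simp: gr_elem_def)
    also have "\<dots> = gr_elem G (a \<otimes> b) g"
      using assms True by (simp add: gr_elem_def inv_solve_left')
    finally show ?thesis
      using True by (simp add: gr_mult_def)
  qed (use assms in \<open>auto simp: gr_mult_def gr_elem_def\<close>)
qed

lemma gr_mult_assoc:
  assumes "finite (carrier G)"
  shows "gr_mult G (gr_mult G x y) z = gr_mult G x (gr_mult G y z)"
proof
  fix g
  show "gr_mult G (gr_mult G x y) z g = gr_mult G x (gr_mult G y z) g"
  proof (cases "g \<in> carrier G")
    case True
    have cancel: "k \<otimes> (inv k \<otimes> a) = a" "inv k \<otimes> (k \<otimes> a) = a"
      if "k \<in> carrier G" "a \<in> carrier G" for k a
      using that by (simp_all flip: m_assoc)
    have shift: "(\<Sum>h\<in>carrier G. y (inv k \<otimes> h) * z (inv h \<otimes> g))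
        = (\<Sum>h\<in>carrier G. y h * z (inv h \<otimes> (inv k \<otimes> g)))" if "k \<in> carrier G" for k
      by (rule sum.reindex_bij_witness[where i = "\<lambda>h. k \<otimes> h" and j = "\<lambda>h. inv k \<otimes> h"])
        (use that True in \<open>simp_all add: inv_mult_group m_assoc cancel\<close>)
    have "gr_mult G (gr_mult G x y) z g
        = (\<Sum>h\<in>carrier G. (\<Sum>k\<in>carrier G. x k * y (inv k \<otimes> h)) * z (inv h \<otimes> g))"
      using True by (simp add: gr_mult_def)
    also have "\<dots> = (\<Sum>k\<in>carrier G. x k * (\<Sum>h\<in>carrier G. y (inv k \<otimes> h) * z (inv h \<otimes> g)))"
      unfolding sum_distrib_left sum_distrib_right mult.assoc by (rule sum.swap)
    also have "\<dots> = gr_mult G x (gr_mult G y z) g"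
      using True by (simp add: gr_mult_def shift)
    finally show ?thesis .
  qed (simp add: gr_mult_def)
qed

lemma intertwine_nat_pow:
  assumes "u \<in> carrier G" "x \<in> carrier G" "y \<in> carrier G" "u \<otimes> x = y \<otimes> u"
  shows "u \<otimes> x [^] (k::nat) = y [^] k \<otimes> u"
proof (induction k)
  case (Suc k)
  have "u \<otimes> x [^] Suc k = (u \<otimes> x [^] k) \<otimes> x"
    using assms by (simp add: m_assoc)
  also have "\<dots> = y [^] k \<otimes> (u \<otimes> x)"
    using assms Suc by (simp add: m_assoc)
  finally show ?case
    using assms by (simp add: m_assoc)
qed (use assms in simp)

lemma nat_pow_commute_exp:
  assumes "\<sigma> \<in> carrier G" "\<tau> \<in> carrier G" "\<sigma> \<otimes> \<tau> = \<tau> [^] (a::nat) \<otimes> \<sigma>"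
  shows "\<sigma> [^] (j::nat) \<otimes> \<tau> = \<tau> [^] (a ^ j) \<otimes> \<sigma> [^] j"
proof (induction j)
  case (Suc j)
  have "\<sigma> [^] Suc j \<otimes> \<tau> = \<sigma> [^] j \<otimes> \<tau> [^] a \<otimes> \<sigma>"
    using assms by (simp add: m_assoc)
  also have "\<dots> = (\<tau> [^] (a ^ j)) [^] a \<otimes> \<sigma> [^] j \<otimes> \<sigma>"
    using assms Suc by (simp add: intertwine_nat_pow)
  finally show ?case
    using assms by (simp add: m_assoc nat_pow_pow mult.commute)
qed (use assms in simp)

lemma theta_eqI:
  assumes "\<tau> \<in> carrier G" "\<sigma> \<in> carrier G" "\<sigma> [^] j \<otimes> \<tau> = \<tau> [^] t \<otimes> \<sigma> [^] j"
    and "0 < t" "t < ord \<tau>"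
  shows "theta G (ord \<tau>) \<tau> \<sigma> j = t"
  unfolding theta_def
proof (rule the_equality)
  have conj: "\<sigma> [^] j \<otimes> \<tau> \<otimes> inv (\<sigma> [^] j) = \<tau> [^] t"
    using assms by (simp add: inv_solve_right')
  then show "t \<in> {1..ord \<tau> - 1} \<and> \<sigma> [^] j \<otimes> \<tau> \<otimes> inv (\<sigma> [^] j) = \<tau> [^] t"
    using assms by auto
  fix t'
  assume "t' \<in> {1..ord \<tau> - 1} \<and> \<sigma> [^] j \<otimes> \<tau> \<otimes> inv (\<sigma> [^] j) = \<tau> [^] t'"
  then have "\<tau> [^] t' = \<tau> [^] t" "t' \<in> {0..ord \<tau> - 1}"
    using conj by auto
  then show "t' = t"
    using inj_onD[OF ord_inj[OF \<open>\<tau> \<in> carrier G\<close>]] assms by simp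
qed

lemma nat_pow_commute_theta:
  assumes fin: "finite (carrier G)" and tau: "\<tau> \<in> carrier G" and sigma: "\<sigma> \<in> carrier G"
    and "\<tau> \<noteq> \<one>" and "\<sigma> \<otimes> \<tau> \<otimes> inv \<sigma> \<in> generate G {\<tau>}"
  shows "\<sigma> [^] j \<otimes> \<tau> = \<tau> [^] theta G (ord \<tau>) \<tau> \<sigma> j \<otimes> \<sigma> [^] j"
proof -
  obtain a :: nat where "\<sigma> \<otimes> \<tau> \<otimes> inv \<sigma> = \<tau> [^] a"
    using \<open>\<sigma> \<otimes> \<tau> \<otimes> inv \<sigma> \<in> generate G {\<tau>}\<close>
    unfolding generate_pow_on_finite_carrier[OF fin tau] by auto
  then have "\<sigma> \<otimes> \<tau> = \<tau> [^] a \<otimes> \<sigma>"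
    using tau sigma by (simp add: inv_solve_right')
  then have "\<sigma> [^] j \<otimes> \<tau> = \<tau> [^] (a ^ j) \<otimes> \<sigma> [^] j"
    by (rule nat_pow_commute_exp[OF sigma tau])
  moreover have "\<tau> [^] (a ^ j) \<in> {\<tau> [^] x | x. x \<in> (UNIV :: nat set)}"
    by blast
  then obtain t where t: "\<tau> [^] (a ^ j) = \<tau> [^] t" "t \<le> ord \<tau> - 1"
    unfolding ord_elems[OF fin tau] by auto
  ultimately have conj: "\<sigma> [^] j \<otimes> \<tau> = \<tau> [^] t \<otimes> \<sigma> [^] j"
    by simp
  have "t \<noteq> 0"
  proof
    assume "t = 0"
    then have "\<sigma> [^] j \<otimes> \<tau> = \<sigma> [^] j"
      using conj sigma by simp
    then show False
      using \<open>\<tau> \<noteq> \<one>\<close> tau sigma by simp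
  qed
  moreover have "t < ord \<tau>"
    using t ord_ge_1[OF fin tau] by linarith
  ultimately show ?thesis
    using conj theta_eqI tau sigma by simp
qed

lemma gr_one_diff_power_eq:
  assumes "finite (carrier G)" "\<tau> \<in> carrier G"
  shows "gr_mult G (gr_elem G \<one> - gr_elem G \<tau>) (\<Sum>i<n::nat. gr_elem G (\<tau> [^] i))
       = gr_elem G \<one> - gr_elem G (\<tau> [^] n)"
proof -
  have "gr_mult G (gr_elem G \<one> - gr_elem G \<tau>) (gr_elem G (\<tau> [^] i))
      = gr_elem G (\<tau> [^] i) - gr_elem G (\<tau> [^] Suc i)" for i :: nat
    using assms by (simp add: gr_mult_diff_left gr_elem_mult flip: nat_pow_Suc2)
  then show ?thesis
    by (simp only: gr_mult_sum_right sum_lessThan_telescope'[of "\<lambda>i. gr_elem G (\<tau> [^] i)"]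
        nat_pow_0)
qed

lemma gr_mult_involution_one_diff:
  assumes fin: "finite (carrier G)" and "u \<in> carrier G" "u \<otimes> u = \<one>"
  shows "gr_mult G (gr_elem G u) (gr_mult G (gr_elem G \<one> - gr_elem G u) z)
       = - gr_mult G (gr_elem G \<one> - gr_elem G u) z"
proof -
  have "gr_mult G (gr_elem G u) (gr_elem G \<one> - gr_elem G u) = - (gr_elem G \<one> - gr_elem G u)"
    using assms by (simp add: gr_mult_diff_right gr_elem_mult)
  then show ?thesis
    by (simp only: gr_mult_assoc[OF fin, symmetric] gr_mult_minus_left)
qed

lemma gr_one_diff_geometric_commute:
  assumes fin: "finite (carrier G)" and "\<tau> \<in> carrier G" "v \<in> carrier G"
    and "v \<otimes> \<tau> = \<tau> [^] (t::nat) \<otimes> v"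
  shows "gr_mult G (gr_elem G \<one> - gr_elem G \<tau>) (gr_mult G (\<Sum>i<t. gr_elem G (\<tau> [^] i)) (gr_elem G v))
       = gr_mult G (gr_elem G v) (gr_elem G \<one> - gr_elem G \<tau>)"
  using assms
  unfolding gr_mult_assoc[OF fin, symmetric] gr_one_diff_power_eq[OF assms(1,2)]
  by (simp add: gr_mult_diff_left gr_mult_diff_right gr_elem_mult)

lemma gr_one_diff_inverting_commute:
  assumes fin: "finite (carrier G)" and tau: "\<tau> \<in> carrier G" and u: "u \<in> carrier G"
    and inverts: "u \<otimes> \<tau> = inv \<tau> \<otimes> u" and tau_order: "\<tau> [^] Suc (2 * c) = \<one>"
  shows "gr_mult G (gr_mult G (gr_elem G \<one> - gr_elem G \<tau>) (gr_elem G \<one> - gr_elem G u))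
           (gr_elem G (\<tau> [^] Suc c))
       = gr_mult G (gr_mult G (gr_elem G (\<tau> [^] Suc c)) (gr_elem G \<one> + gr_elem G u))
           (gr_elem G \<one> - gr_elem G \<tau>)"
proof -
  \<comment> \<open>Naming \<open>Suc c\<close> keeps simp from rewriting \<open>\<tau> [^] m\<close> to \<open>\<tau> [^] c \<otimes> \<tau>\<close>.\<close>
  define m where "m = Suc c"
  have inverted: "u \<otimes> \<tau> [^] a = \<tau> [^] b \<otimes> u" if "a + b = m + c" for a b :: nat
  proof -
    have "a + b = Suc (2 * c)"
      using that by (simp add: m_def)
    then have "\<tau> [^] b \<otimes> \<tau> [^] a = \<one>"
      using tau tau_order by (simp add: nat_pow_mult add.commute)
    then have "inv (\<tau> [^] a) = \<tau> [^] b"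
      using tau by (simp add: inv_equality)
    then show ?thesis
      using tau u inverts intertwine_nat_pow[of u \<tau> "inv \<tau>" a] by (simp add: nat_pow_inv)
  qed
  have tau_tau_c: "\<tau> \<otimes> \<tau> [^] c = \<tau> [^] m" "\<tau> [^] c \<otimes> \<tau> = \<tau> [^] m"
    using tau nat_pow_Suc2[of \<tau> c] by (simp_all add: m_def)
  have u_tau_m: "u \<otimes> \<tau> [^] m = \<tau> [^] c \<otimes> u"
    using inverted by simp
  have u_tau_c: "u \<otimes> \<tau> [^] c = \<tau> [^] m \<otimes> u"
    using inverted by simp
  have "\<tau> \<otimes> u \<otimes> \<tau> [^] m = \<tau> \<otimes> (\<tau> [^] c \<otimes> u)"
    using tau u by (simp add: m_assoc u_tau_m)
  also have "\<dots> = \<tau> [^] m \<otimes> u"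
    using tau u by (simp add: tau_tau_c flip: m_assoc)
  finally have tau_u_tau_m: "\<tau> \<otimes> u \<otimes> \<tau> [^] m = \<tau> [^] m \<otimes> u" .
  have "\<tau> [^] m \<otimes> u \<otimes> \<tau> = u \<otimes> \<tau> [^] c \<otimes> \<tau>"
    by (simp only: u_tau_c)
  also have "\<dots> = u \<otimes> \<tau> [^] m"
    using tau u by (simp add: m_assoc tau_tau_c)
  finally have tau_m_u_tau: "\<tau> [^] m \<otimes> u \<otimes> \<tau> = \<tau> [^] c \<otimes> u"
    by (simp only: u_tau_m)
  have tau_tau_m: "\<tau> \<otimes> \<tau> [^] m = \<tau> [^] m \<otimes> \<tau>"
    using tau nat_pow_Suc2[of \<tau> m] by simp
  show ?thesis
    unfolding m_def[symmetric] using fin tau u u_tau_m tau_u_tau_m tau_m_u_tau tau_tau_m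
    by (simp add: gr_mult_diff_left gr_mult_diff_right gr_mult_add_left gr_mult_add_right
        gr_elem_mult algebra_simps)
qed

lemma gr_one_diff_mult_twisted_sum:
  fixes c h :: nat and \<theta> :: "nat \<Rightarrow> nat"
  assumes fin: "finite (carrier G)" and tau: "\<tau> \<in> carrier G" and sigma: "\<sigma> \<in> carrier G"
    and tau_order: "\<tau> [^] Suc (2 * c) = \<one>"
    and inverts: "\<sigma> [^] h \<otimes> \<tau> = inv \<tau> \<otimes> \<sigma> [^] h"
    and twists: "\<And>j. j < h \<Longrightarrow> \<sigma> [^] j \<otimes> \<tau> = \<tau> [^] \<theta> j \<otimes> \<sigma> [^] j"
  shows "gr_mult G (gr_elem G \<one> - gr_elem G \<tau>)
           (gr_mult G (gr_mult G (gr_elem G \<one> - gr_elem G (\<sigma> [^] h)) (gr_elem G (\<tau> [^] Suc c)))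
             (\<Sum>j<h. gr_mult G (\<Sum>i<\<theta> j. gr_elem G (\<tau> [^] i)) (gr_elem G (\<sigma> [^] j))))
       = gr_mult G (gr_mult G (gr_elem G (\<tau> [^] Suc c)) (\<Sum>j<2 * h. gr_elem G (\<sigma> [^] j)))
           (gr_elem G \<one> - gr_elem G \<tau>)"
proof -
  let ?e = "gr_elem G" and ?m = "gr_mult G"
  let ?D = "?e \<one> - ?e \<tau>" and ?M = "?e (\<tau> [^] Suc c)" and ?u = "\<sigma> [^] h"
  have half_sum: "?m ?D (\<Sum>j<h. ?m (\<Sum>i<\<theta> j. ?e (\<tau> [^] i)) (?e (\<sigma> [^] j)))
      = (\<Sum>j<h. ?m (?e (\<sigma> [^] j)) ?D)"
    unfolding gr_mult_sum_right
    by (rule sum.cong[OF refl]) (simp add: gr_one_diff_geometric_commute fin tau sigma twists)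
  have full_sum: "?m (?e \<one> + ?e ?u) (\<Sum>j<h. ?e (\<sigma> [^] j)) = (\<Sum>j<2 * h. ?e (\<sigma> [^] j))"
    using fin sigma
    by (simp add: mult_2 sum_lessThan_add sum.distrib gr_mult_add_left gr_mult_sum_right gr_elem_mult
        nat_pow_mult)
  have "?m ?D (?m (?m (?e \<one> - ?e ?u) ?M) (\<Sum>j<h. ?m (\<Sum>i<\<theta> j. ?e (\<tau> [^] i)) (?e (\<sigma> [^] j))))
      = ?m (?m (?m ?D (?e \<one> - ?e ?u)) ?M) (\<Sum>j<h. ?m (\<Sum>i<\<theta> j. ?e (\<tau> [^] i)) (?e (\<sigma> [^] j)))"
    by (simp only: gr_mult_assoc[OF fin])
  also have "\<dots> = ?m (?m (?m ?M (?e \<one> + ?e ?u)) ?D)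
      (\<Sum>j<h. ?m (\<Sum>i<\<theta> j. ?e (\<tau> [^] i)) (?e (\<sigma> [^] j)))"
    using gr_one_diff_inverting_commute[OF fin tau _ inverts tau_order] sigma by simp
  also have "\<dots> = ?m (?m ?M (?e \<one> + ?e ?u)) (\<Sum>j<h. ?m (?e (\<sigma> [^] j)) ?D)"
    by (simp only: gr_mult_assoc[OF fin] half_sum)
  also have "\<dots> = ?m (?m ?M (?m (?e \<one> + ?e ?u) (\<Sum>j<h. ?e (\<sigma> [^] j)))) ?D"
    by (simp add: gr_mult_assoc[OF fin] gr_mult_sum_left)
  finally show ?thesis
    by (simp only: full_sum)
qed

end

theorem lemma6p2:
  fixes G (structure) and \<tau> \<sigma> :: 'a and d s :: nat
  assumes grp: "group G" and fin: "finite (carrier G)"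
    and d_odd: "odd d" and s_even: "even s" and s_dvd: "s dvd d - 1"
    and tau: "\<tau> \<in> carrier G" and sigma: "\<sigma> \<in> carrier G"
    and ord_tau: "group.ord G \<tau> = d" and ord_sigma: "group.ord G \<sigma> = s"
    and gen: "carrier G = {\<tau> [^] (a::nat) \<otimes> \<sigma> [^] (b::nat) | a b. True}"
    and inter: "generate G {\<tau>} \<inter> generate G {\<sigma>} = {\<one>}"
    and normal: "\<sigma> \<otimes> \<tau> \<otimes> inv \<sigma> \<in> generate G {\<tau>}"
    and conj_order: "\<forall>k::nat. 0 < k \<and> k < s \<longrightarrow> \<sigma> [^] k \<otimes> \<tau> \<otimes> inv (\<sigma> [^] k) \<noteq> \<tau>"
    and half: "\<sigma> [^] (s div 2) \<otimes> \<tau> \<otimes> inv (\<sigma> [^] (s div 2)) = inv \<tau>"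
  defines "one_minus_tau \<equiv> gr_elem G \<one> - gr_elem G \<tau>"
    and "T\<sigma> \<equiv> (\<Sum>j<s. gr_elem G (\<sigma> [^] j))"
    and "B \<equiv> gr_mult G (gr_mult G (gr_elem G \<one> - gr_elem G (\<sigma> [^] (s div 2)))
                                  (gr_elem G (\<tau> [^] ((d + 1) div 2))))
              (\<Sum>j<s div 2. gr_mult G (\<Sum>i<theta G d \<tau> \<sigma> j. gr_elem G (\<tau> [^] i))
                                       (gr_elem G (\<sigma> [^] j)))"
  shows "gr_mult G (gr_elem G (\<sigma> [^] (s div 2))) B = - B
       \<and> (gr_mult G one_minus_tau B
           = gr_mult G (gr_mult G (gr_elem G (\<tau> [^] ((d + 1) div 2))) T\<sigma>) one_minus_tau)"
proof -
  interpret group G by fact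
  obtain c where d: "d = Suc (2 * c)"
    using d_odd by (auto elim: oddE)
  obtain h where s: "s = 2 * h"
    using s_even by (auto elim: evenE)
  have halves: "s div 2 = h" "(d + 1) div 2 = Suc c"
    using s d by simp_all
  have "1 < s"
    using ord_ge_1[OF fin sigma] ord_sigma s_even by presburger
  \<comment> \<open>Otherwise \<open>theta\<close> would be a junk value: \<open>{1..d-1}\<close> is empty for \<open>d = 1\<close>.\<close>
  then have "\<tau> \<noteq> \<one>"
    using conj_order[rule_format, of 1] sigma by auto
  then have twists: "\<sigma> [^] j \<otimes> \<tau> = \<tau> [^] theta G d \<tau> \<sigma> j \<otimes> \<sigma> [^] j" for j
    using nat_pow_commute_theta[OF fin tau sigma _ normal] ord_tau by simp
  have involution: "\<sigma> [^] h \<otimes> \<sigma> [^] h = \<one>"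
    using sigma ord_sigma s by (metis mult_2 nat_pow_mult pow_ord_eq_1)
  have inverts: "\<sigma> [^] h \<otimes> \<tau> = inv \<tau> \<otimes> \<sigma> [^] h"
    using half tau sigma by (simp add: halves inv_solve_right')
  have tau_order: "\<tau> [^] Suc (2 * c) = \<one>"
    using tau ord_tau d by (metis pow_ord_eq_1)
  have "gr_mult G (gr_elem G (\<sigma> [^] h)) B = - B"
    unfolding B_def halves gr_mult_assoc[OF fin]
    by (rule gr_mult_involution_one_diff[OF fin _ involution]) (use sigma in simp)
  moreover have "gr_mult G one_minus_tau B
      = gr_mult G (gr_mult G (gr_elem G (\<tau> [^] Suc c)) (\<Sum>j<2 * h. gr_elem G (\<sigma> [^] j))) one_minus_tau"
    unfolding B_def one_minus_tau_def halves
    by (rule gr_one_diff_mult_twisted_sum[OF fin tau sigma tau_order inverts twists])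
  ultimately show ?thesis
    unfolding T\<sigma>_def halves s by simp
qed

end
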